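(* Let $P$ be a program of the imperative language described in the context, and suppose $\vdash P : M$ is derivable in the deterministic calculus, where $M$ is an $n\times n$ matrix with coefficients in $\{0,1,2\}^p\to\mathrm{mwp}^{\infty}$. Then for every $\vec a\in\{0,1,2\}^p$: $\vdash_{\mathrm{JK}} P : M[\vec a]$ is derivable in the original Jones–Kristiansen calculus if and only if no coefficient of $M[\vec a]$ equals $\infty$.
   Context: Language. Variables range over $X_1,\dots,X_n$ (a fixed finite set), and $b$ ranges over boolean expressions (unspecified; they play no role). Expressions: $e ::= X \mid X - Y \mid X + Y \mid X * Y$. Commands: $C ::= X = e \mid \texttt{if } b \texttt{ then } C \texttt{ else } C \mid \texttt{while } b \texttt{ do } \{C\} \mid \texttt{loop } X \{C\} \mid C;C$, where $\texttt{loop } X\{C\}$ executes $C$ $X$ times. A program is a sequential composition of commands. Semi-rings. $\mathrm{mwp}$ has carrier $\{0,m,w,p\}$ with $0<m<w<p$, addition $\max$, and $\alpha\times\beta=\max(\alpha,\beta)$ if $\alpha,\beta\neq0$, $0$ otherwise. $\mathrm{mwp}^\infty$ has carrier $\{0,m,w,p,\infty\}$ with $0<m<w<p<\infty$, addition $\max$, and $\alpha\times\beta=0$ if $\alpha,\beta\neq\infty$ and one of them is $0$, $\max(\alpha,\beta)$ otherwise. $\{0,1,2\}^p\to\mathrm{mwp}^\infty$ is the semi-ring of functions with pointwise operations (constants identified with constant functions). Matrices are $n\times n$ with componentwise $\oplus$, usual product $\otimes$, unit $\mathbf{1}$ ($m$ on the diagonal, $0$ elsewhere), closure $M^*=\mathbf{1}\oplus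 M\oplus M^2\oplus\cdots$. $M[\vec a]$ is $M$ with every coefficient evaluated at $\vec a$. $\delta(i,k)(\vec a)=m$ if $a_k=i$, $0$ otherwise. $\{^{\alpha}_i\}$ is the $n$-vector with $\alpha$ in row $i$ and $0$ elsewhere, $\{^\alpha_i,^\beta_j\}=\{^\alpha_i\}\oplus\{^\beta_j\}$, $\alpha V$ is scalar multiplication, $\mathbf{1}\xleftarrow{j}V$ is the unit matrix with column $j$ replaced by $V$, $\{^\alpha_i\to j\}$ is the matrix with $\alpha$ at $(i,j)$ and $0$ elsewhere, and $\mathrm{var}(e)$ is the set of variables of $e$. Original (non-deterministic) Jones–Kristiansen calculus $\vdash_{\mathrm{JK}}$, over $\mathrm{mwp}$: (E1) $\vdash_{\mathrm{JK}} X_i:\{^m_i\}$; (E2) $\vdash_{\mathrm{JK}} e:\bigoplus\{\{^w_i\}\mid X_i\in\mathrm{var}(e)\}$; (E3) for $\star\in\{+,-\}$, from $\vdash_{\mathrm{JK}}X_i:V_1$, $\vdash_{\mathrm{JK}}X_j:V_2$ infer $\vdash_{\mathrm{JK}}X_i\star X_j: pV_1\oplus V_2$; (E4) same premises, conclusion $V_1\oplus pV_2$; (A) from $\vdash_{\mathrm{JK}}e:V$ infer $\vdash_{\mathrm{JK}}X_j=e:\mathbf{1}\xleftarrow{j}V$; (C) $C_1;C_2:M_1\otimes M_2$; (I) $\texttt{if } b \texttt{ then } C_1\texttt{ else } C_2 : M_1\oplus M_2$; (L) from $\vdash_{\mathrm{JK}}C:M$, provided $M^*_{ii}=m$ for all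 $i$, infer $\vdash_{\mathrm{JK}}\texttt{loop } X_l\{C\}: M^*\oplus\{^p_l\to j\mid\exists i,\ M^*_{ij}=p\}$; (W) from $\vdash_{\mathrm{JK}}C:M$, provided $M^*_{ii}=m$ for all $i$ and $M^*_{ij}\neq p$ for all $i,j$, infer $\vdash_{\mathrm{JK}}\texttt{while } b\texttt{ do }\{C\}:M^*$. Deterministic calculus $\vdash$, over $\{0,1,2\}^p\to\mathrm{mwp}^\infty$: each application of rule E$^A$ receives its own choice index $k\in\{1,\dots,p\}$ ($p$ = number of applications). (E$^A$) for $\star\in\{+,-\}$: $\vdash X_i\star X_j:\delta(0,k)\{^m_i,^p_j\}\oplus\delta(1,k)\{^p_i,^m_j\}\oplus\delta(2,k)\{^w_i,^w_j\}$; (E$^M$) $\vdash X_i*X_j:\{^w_i,^w_j\}$; (E$^S$) $\vdash X_i:\{^m_i\}$; rules (A), (C), (I) as in the original calculus; (L$^\infty$) from $\vdash C:M$ infer $\vdash\texttt{loop } X_l\{C\}:M^*\oplus\{^\infty_j\to j\mid M^*_{jj}\neq m\}\oplus\{^p_l\to j\mid\exists i,\ M^*_{ij}=p\}$; (W$^\infty$) from $\vdash C:M$ infer $\vdash\texttt{while } b\texttt{ do }\{C\}:M^*\oplus\{^\infty_j\to j\mid M^*_{jj}\neq m\}\oplus\{^\infty_i\to j\mid M^*_{ij}=p\}$ (conditions understood pointwise for each choice assignment). *)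

theory Defs
  imports Main "HOL-Library.FuncSet" "HOL-Library.Function_Algebras"
begin

text \<open>Variables X_0, ..., X_(n-1) are represented by their indices (natural numbers).
  Boolean expressions are left abstract (type parameter 'b).\<close>

datatype expr = Var nat | Minus nat nat | Plus nat nat | Times nat nat

datatype 'b cmd =
    Assign nat expr
  | If 'b "'b cmd" "'b cmd"
  | While 'b "'b cmd"
  | Loop nat "'b cmd"
  | Seq "'b cmd" "'b cmd"

fun evars :: "expr \<Rightarrow> nat set" where
  "evars (Var i) = {i}"
| "evars (Minus i j) = {i, j}"
| "evars (Plus i j) = {i, j}"
| "evars (Times i j) = {i, j}"

fun cvars :: "'b cmd \<Rightarrow> nat set" where
  "cvars (Assign j e) = insert j (evars e)"
| "cvars (If b C1 C2) = cvars C1 \<union> cvars C2"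
| "cvars (While b C) = cvars C"
| "cvars (Loop l C) = insert l (cvars C)"
| "cvars (Seq C1 C2) = cvars C1 \<union> cvars C2"

section \<open>The semi-ring mwp^infinity (mwp is its subset without Infty)\<close>

datatype mwpinf = Zero | M | W | P | Infty

fun rank :: "mwpinf \<Rightarrow> nat" where
  "rank Zero = 0" | "rank M = 1" | "rank W = 2" | "rank P = 3" | "rank Infty = 4"

lemma rank_inj: "rank x = rank y \<Longrightarrow> x = y"
  by (cases x; cases y; simp)

instantiation mwpinf :: linorder
begin
definition less_eq_mwpinf :: "mwpinf \<Rightarrow> mwpinf \<Rightarrow> bool" where
  "less_eq_mwpinf x y \<longleftrightarrow> rank x \<le> rank y"
definition less_mwpinf :: "mwpinf \<Rightarrow> mwpinf \<Rightarrow> bool" where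
  "less_mwpinf x y \<longleftrightarrow> rank x < rank y"
instance
  by standard (auto simp: less_eq_mwpinf_def less_mwpinf_def intro: rank_inj)
end

instance mwpinf :: finite
proof
  have "(UNIV :: mwpinf set) = {Zero, M, W, P, Infty}"
    by (auto intro: mwpinf.exhaust)
  then show "finite (UNIV :: mwpinf set)" by (metis finite.emptyI finite_insert)
qed

instantiation mwpinf :: "{zero, one, plus, times}"
begin
definition zero_mwpinf :: mwpinf where "zero_mwpinf = Zero"
definition one_mwpinf :: mwpinf where "one_mwpinf = M"
definition plus_mwpinf :: "mwpinf \<Rightarrow> mwpinf \<Rightarrow> mwpinf" where
  "plus_mwpinf x y = max x y"
text \<open>mwp^infinity product: 0 if neither is Infty and one of them is 0, max otherwise.
  On the Infty-free part this coincides with the mwp product.\<close>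
definition times_mwpinf :: "mwpinf \<Rightarrow> mwpinf \<Rightarrow> mwpinf" where
  "times_mwpinf x y =
     (if x \<noteq> Infty \<and> y \<noteq> Infty \<and> (x = Zero \<or> y = Zero) then Zero else max x y)"
instance ..
end

type_synonym 'a vec = "nat \<Rightarrow> 'a"
type_synonym 'a mat = "nat \<Rightarrow> nat \<Rightarrow> 'a"

definition vsing :: "nat \<Rightarrow> 'a::zero \<Rightarrow> 'a vec" where
  "vsing i \<alpha> = (\<lambda>r. if r = i then \<alpha> else 0)"

definition vadd :: "'a::plus vec \<Rightarrow> 'a vec \<Rightarrow> 'a vec" where
  "vadd U V = (\<lambda>r. U r + V r)"

definition vscale :: "'a::times \<Rightarrow> 'a vec \<Rightarrow> 'a vec" where
  "vscale \<alpha> V = (\<lambda>r. \<alpha> * V r)"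

definition madd :: "'a::plus mat \<Rightarrow> 'a mat \<Rightarrow> 'a mat" where
  "madd A B = (\<lambda>i j. A i j + B i j)"

definition mmul :: "nat \<Rightarrow> 'a::{zero,plus,times} mat \<Rightarrow> 'a mat \<Rightarrow> 'a mat" where
  "mmul n A B = (\<lambda>i j. if i < n \<and> j < n
      then foldr (\<lambda>k acc. A i k * B k j + acc) [0..<n] 0 else 0)"

definition mone :: "nat \<Rightarrow> 'a::{zero,one} mat" where
  "mone n = (\<lambda>i j. if i = j \<and> i < n then 1 else 0)"

definition colupd :: "nat \<Rightarrow> nat \<Rightarrow> 'a::{zero,one} vec \<Rightarrow> 'a mat" where
  "colupd n j V = (\<lambda>r c. if c = j then (if r < n then V r else 0) else mone n r c)"

definition msing :: "nat \<Rightarrow> nat \<Rightarrow> 'a::zero \<Rightarrow> 'a mat" where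
  "msing i j \<alpha> = (\<lambda>r c. if r = i \<and> c = j then \<alpha> else 0)"

fun mpow :: "nat \<Rightarrow> 'a::{zero,one,plus,times} mat \<Rightarrow> nat \<Rightarrow> 'a mat" where
  "mpow n A 0 = mone n"
| "mpow n A (Suc k) = mmul n (mpow n A k) A"

text \<open>Closure M^* = 1 + M + M^2 + ... over mwp^infinity (supremum w.r.t. max, a finite lattice).\<close>
definition mstar :: "nat \<Rightarrow> mwpinf mat \<Rightarrow> mwpinf mat" where
  "mstar n A = (\<lambda>i j. Max (range (\<lambda>k. mpow n A k i j)))"

section \<open>Original Jones-Kristiansen calculus (over mwp, i.e. Infty-free coefficients)\<close>

definition wvars :: "expr \<Rightarrow> mwpinf vec" where
  "wvars e = (\<lambda>r. if r \<in> evars e then W else Zero)"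

inductive jk_e :: "expr \<Rightarrow> mwpinf vec \<Rightarrow> bool" where
  E1: "jk_e (Var i) (vsing i M)"
| E2: "jk_e e (wvars e)"
| E3_minus: "jk_e (Var i) V1 \<Longrightarrow> jk_e (Var j) V2 \<Longrightarrow> jk_e (Minus i j) (vadd (vscale P V1) V2)"
| E3_plus: "jk_e (Var i) V1 \<Longrightarrow> jk_e (Var j) V2 \<Longrightarrow> jk_e (Plus i j) (vadd (vscale P V1) V2)"
| E4_minus: "jk_e (Var i) V1 \<Longrightarrow> jk_e (Var j) V2 \<Longrightarrow> jk_e (Minus i j) (vadd V1 (vscale P V2))"
| E4_plus: "jk_e (Var i) V1 \<Longrightarrow> jk_e (Var j) V2 \<Longrightarrow> jk_e (Plus i j) (vadd V1 (vscale P V2))"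

inductive jk :: "nat \<Rightarrow> 'b cmd \<Rightarrow> mwpinf mat \<Rightarrow> bool" for n where
  A: "jk_e e V \<Longrightarrow> jk n (Assign j e) (colupd n j V)"
| C: "jk n C1 M1 \<Longrightarrow> jk n C2 M2 \<Longrightarrow> jk n (Seq C1 C2) (mmul n M1 M2)"
| I: "jk n C1 M1 \<Longrightarrow> jk n C2 M2 \<Longrightarrow> jk n (If b C1 C2) (madd M1 M2)"
| L: "jk n C A \<Longrightarrow> (\<forall>i<n. mstar n A i i = M) \<Longrightarrow>
      jk n (Loop l C) (madd (mstar n A)
         (\<lambda>r c. if r = l \<and> c < n \<and> (\<exists>i<n. mstar n A i c = P) then P else Zero))"
| W: "jk n C A \<Longrightarrow> (\<forall>i<n. mstar n A i i = M) \<Longrightarrow> (\<forall>i<n. \<forall>j<n. mstar n A i j \<noteq> P) \<Longrightarrow>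
      jk n (While b C) (mstar n A)"

text \<open>A choice vector a in {0,1,2}^p is a function on the choice indices {1..p}.
  Coefficients are functions from choice vectors to mwp^infinity, with pointwise
  operations (HOL-Library.Function_Algebras); constants are constant functions.\<close>

type_synonym choice = "nat \<Rightarrow> nat"
type_synonym coef = "choice \<Rightarrow> mwpinf"

definition cst :: "mwpinf \<Rightarrow> coef" where "cst \<alpha> = (\<lambda>_. \<alpha>)"

definition delta :: "nat \<Rightarrow> nat \<Rightarrow> coef" where
  "delta i k = (\<lambda>a. if a k = i then M else Zero)"

definition evalm :: "coef mat \<Rightarrow> choice \<Rightarrow> mwpinf mat" where
  "evalm A a = (\<lambda>i j. A i j a)"

text \<open>Closure in the function semi-ring: pointwise (the infinite sum is pointwise).\<close>
definition fstar :: "nat \<Rightarrow> coef mat \<Rightarrow> coef mat" where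
  "fstar n A = (\<lambda>i j a. mstar n (evalm A a) i j)"

text \<open>det_e e K V: |- e : V, where K is the set of choice indices used by E^A applications.\<close>
inductive det_e :: "expr \<Rightarrow> nat set \<Rightarrow> coef vec \<Rightarrow> bool" where
  EA_minus: "det_e (Minus i j) {k}
     (vadd (vadd (vscale (delta 0 k) (vadd (vsing i (cst M)) (vsing j (cst P))))
                 (vscale (delta 1 k) (vadd (vsing i (cst P)) (vsing j (cst M)))))
           (vscale (delta 2 k) (vadd (vsing i (cst W)) (vsing j (cst W)))))"
| EA_plus: "det_e (Plus i j) {k}
     (vadd (vadd (vscale (delta 0 k) (vadd (vsing i (cst M)) (vsing j (cst P))))
                 (vscale (delta 1 k) (vadd (vsing i (cst P)) (vsing j (cst M)))))
           (vscale (delta 2 k) (vadd (vsing i (cst W)) (vsing j (cst W)))))"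
| EM: "det_e (Times i j) {} (vadd (vsing i (cst W)) (vsing j (cst W)))"
| ES: "det_e (Var i) {} (vsing i (cst M))"

text \<open>det n C K A: |- C : A, where K is the set of choice indices of the E^A applications
  in the derivation; distinct applications get distinct indices (disjointness).\<close>
inductive det :: "nat \<Rightarrow> 'b cmd \<Rightarrow> nat set \<Rightarrow> coef mat \<Rightarrow> bool" for n where
  A: "det_e e K V \<Longrightarrow> det n (Assign j e) K (colupd n j V)"
| C: "det n C1 K1 M1 \<Longrightarrow> det n C2 K2 M2 \<Longrightarrow> K1 \<inter> K2 = {} \<Longrightarrow>
      det n (Seq C1 C2) (K1 \<union> K2) (mmul n M1 M2)"
| I: "det n C1 K1 M1 \<Longrightarrow> det n C2 K2 M2 \<Longrightarrow> K1 \<inter> K2 = {} \<Longrightarrow>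
      det n (If b C1 C2) (K1 \<union> K2) (madd M1 M2)"
| L_inf: "det n C K A \<Longrightarrow>
      det n (Loop l C) K
        (madd (madd (fstar n A)
           (\<lambda>r c a. if r = c \<and> c < n \<and> fstar n A c c a \<noteq> M then Infty else Zero))
           (\<lambda>r c a. if r = l \<and> c < n \<and> (\<exists>i<n. fstar n A i c a = P) then P else Zero))"
| W_inf: "det n C K A \<Longrightarrow>
      det n (While b C) K
        (madd (madd (fstar n A)
           (\<lambda>r c a. if r = c \<and> c < n \<and> fstar n A c c a \<noteq> M then Infty else Zero))
           (\<lambda>r c a. if r < n \<and> c < n \<and> fstar n A r c a = P then Infty else Zero))"

end

theory Submission
  imports Defs
begin

text \<open>The original calculus works over mwp, so every matrix it derives is free of \<open>\<infinity>\<close>; this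
  gives one direction. Conversely, evaluation at a choice vector is a semi-ring homomorphism
  from the function semi-ring to \<open>mwp\<^sup>\<infinity>\<close>, the \<open>E\<^sup>A\<close> vector evaluates to the vector of
  rule E4, E3 or E2 according to the choice, and the \<open>\<infinity>\<close>-entries added by the rules
  \<open>L\<^sup>\<infinity>\<close> and \<open>W\<^sup>\<infinity>\<close> are present exactly when the side conditions of L and W fail.
  So an \<open>\<infinity>\<close>-free evaluated derivation is, rule by rule, a derivation in the original
  calculus.\<close>

lemma plus_mwpinf_eq_Infty_iff: "(x::mwpinf) + y = Infty \<longleftrightarrow> x = Infty \<or> y = Infty"
  by (cases x; cases y; simp add: plus_mwpinf_def max_def less_eq_mwpinf_def)

lemma times_mwpinf_eq_Infty_iff: "(x::mwpinf) * y = Infty \<longleftrightarrow> x = Infty \<or> y = Infty"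
  by (cases x; cases y; simp add: times_mwpinf_def max_def less_eq_mwpinf_def)

lemma plus_mwpinf_Zero_right [simp]: "(x::mwpinf) + Zero = x"
  by (cases x; simp add: plus_mwpinf_def max_def less_eq_mwpinf_def)

lemma if_Infty_Zero_eq_Infty_iff [simp]: "(if Q then Infty else Zero) = Infty \<longleftrightarrow> Q"
  by simp

lemma Infty_le_iff: "Infty \<le> x \<longleftrightarrow> x = Infty"
  by (cases x; simp add: less_eq_mwpinf_def)

lemma foldr_plus_mwpinf_eq_Infty_iff:
  "foldr (\<lambda>k acc. f k + acc) ks (0::mwpinf) = Infty \<longleftrightarrow> (\<exists>k\<in>set ks. f k = Infty)"
  by (induction ks) (auto simp: plus_mwpinf_eq_Infty_iff zero_mwpinf_def)

lemma mmul_eq_Infty_iff: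
  "mmul n A B i j = Infty \<longleftrightarrow> i < n \<and> j < n \<and> (\<exists>k<n. (A i k :: mwpinf) = Infty \<or> B k j = Infty)"
proof (cases "i < n \<and> j < n")
  case True
  then show ?thesis
    by (auto simp: mmul_def foldr_plus_mwpinf_eq_Infty_iff times_mwpinf_eq_Infty_iff)
next
  case False
  then show ?thesis by (auto simp: mmul_def zero_mwpinf_def)
qed

lemma madd_Zero_right: "madd A (\<lambda>_ _. Zero) = A"
  by (simp add: madd_def)

lemma mpow_le_mstar: "mpow n A k i j \<le> mstar n A i j"
  unfolding mstar_def by (rule Max_ge) auto

lemma mstar_in_range_mpow: "mstar n A i j \<in> range (\<lambda>k. mpow n A k i j)"
  unfolding mstar_def by (rule Max_in) auto

definition infty_free :: "nat \<Rightarrow> mwpinf mat \<Rightarrow> bool" where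
  "infty_free n A \<longleftrightarrow> (\<forall>i<n. \<forall>j<n. A i j \<noteq> Infty)"

lemma infty_free_mone: "infty_free n (mone n)"
  by (simp add: infty_free_def mone_def one_mwpinf_def zero_mwpinf_def)

lemma infty_free_madd_iff: "infty_free n (madd A B) \<longleftrightarrow> infty_free n A \<and> infty_free n B"
  by (auto simp: infty_free_def madd_def plus_mwpinf_eq_Infty_iff)

lemma infty_free_mmul_iff: "infty_free n (mmul n A B) \<longleftrightarrow> infty_free n A \<and> infty_free n B"
  unfolding infty_free_def mmul_eq_Infty_iff by blast

lemma infty_free_mpow: "infty_free n A \<Longrightarrow> infty_free n (mpow n A k)"
  by (induction k) (simp_all add: infty_free_mone infty_free_mmul_iff)

lemma infty_free_mstar_iff: "infty_free n (mstar n A) \<longleftrightarrow> infty_free n A"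
proof
  assume star_free: "infty_free n (mstar n A)"
  have "mpow n A 1 i j \<noteq> Infty" if "i < n" "j < n" for i j
    using star_free that mpow_le_mstar[of n A 1 i j] Infty_le_iff
    unfolding infty_free_def by metis
  then have "infty_free n (mpow n A 1)"
    by (simp add: infty_free_def)
  then show "infty_free n A"
    by (simp add: infty_free_mmul_iff)
next
  assume "infty_free n A"
  have "mstar n A i j \<noteq> Infty" if "i < n" "j < n" for i j
  proof -
    obtain k where "mstar n A i j = mpow n A k i j"
      using mstar_in_range_mpow by blast
    with \<open>infty_free n A\<close> that show ?thesis
      using infty_free_mpow unfolding infty_free_def by metis
  qed
  then show "infty_free n (mstar n A)"
    by (simp add: infty_free_def)
qed

lemma infty_free_colupd: "(\<And>r. V r \<noteq> Infty) \<Longrightarrow> infty_free n (colupd n j V)"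
  using infty_free_mone by (auto simp: infty_free_def colupd_def zero_mwpinf_def)

lemma jk_e_not_Infty: "jk_e e V \<Longrightarrow> V r \<noteq> Infty"
  by (induction arbitrary: r rule: jk_e.induct)
     (auto simp: vsing_def wvars_def vadd_def vscale_def zero_mwpinf_def
        plus_mwpinf_eq_Infty_iff times_mwpinf_eq_Infty_iff)

lemma jk_infty_free: "jk n C A \<Longrightarrow> infty_free n A"
proof (induction rule: jk.induct)
  case (A e V j)
  then show ?case by (simp add: infty_free_colupd jk_e_not_Infty)
next
  case (L C A l)
  then show ?case
    by (simp add: infty_free_madd_iff infty_free_mstar_iff) (simp add: infty_free_def)
qed (simp_all add: infty_free_madd_iff infty_free_mmul_iff infty_free_mstar_iff)

lemma foldr_plus_fun_apply:
  "foldr (\<lambda>k. (+) (F k)) ks (\<lambda>_. 0::mwpinf) a = foldr (\<lambda>k. (+) (F k a)) ks 0"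
  by (induction ks) (simp_all add: plus_fun_def)

lemma evalm_mmul: "evalm (mmul n A B) a = mmul n (evalm A a) (evalm B a)"
  using foldr_plus_fun_apply[where F = "\<lambda>k x. A _ k x * B k _ x"]
  by (auto simp: evalm_def mmul_def zero_fun_def times_fun_def intro!: ext)

lemma evalm_madd: "evalm (madd A B) a = madd (evalm A a) (evalm B a)"
  by (simp add: evalm_def madd_def plus_fun_def)

lemma evalm_colupd: "evalm (colupd n j V) a = colupd n j (\<lambda>r. V r a)"
  by (auto simp: evalm_def colupd_def mone_def zero_fun_def one_fun_def intro!: ext)

lemma evalm_if: "evalm (\<lambda>r c b. if Q r c b then x else y) a = (\<lambda>r c. if Q r c a then x else y)"
  by (simp add: evalm_def)

lemma fstar_apply: "fstar n A i j a = mstar n (evalm A a) i j"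
  by (simp add: fstar_def evalm_def)

lemma evalm_fstar: "evalm (fstar n A) a = mstar n (evalm A a)"
  by (simp add: evalm_def fstar_def)

definition EA_vec :: "nat \<Rightarrow> nat \<Rightarrow> nat \<Rightarrow> coef vec" where
  "EA_vec i j k =
     vadd (vadd (vscale (delta 0 k) (vadd (vsing i (cst M)) (vsing j (cst P))))
                (vscale (delta 1 k) (vadd (vsing i (cst P)) (vsing j (cst M)))))
          (vscale (delta 2 k) (vadd (vsing i (cst W)) (vsing j (cst W))))"

lemmas coef_vec_eval_simps =
  EA_vec_def vadd_def vscale_def vsing_def delta_def cst_def wvars_def
  plus_fun_def times_fun_def zero_fun_def
  plus_mwpinf_def times_mwpinf_def zero_mwpinf_def max_def less_eq_mwpinf_def

lemma jk_e_EA_vec: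
  assumes e: "e = Minus i j \<or> e = Plus i j" and choice: "a k \<in> {0, 1, 2}"
  shows "jk_e e (\<lambda>r. EA_vec i j k r a)"
proof -
  from choice consider "a k = 0" | "a k = 1" | "a k = 2" by auto
  then show ?thesis
  proof cases
    case 1
    then have "(\<lambda>r. EA_vec i j k r a) = vadd (vsing i M) (vscale P (vsing j M))"
      by (auto simp: coef_vec_eval_simps intro!: ext)
    with e show ?thesis by (auto intro: jk_e.intros)
  next
    case 2
    then have "(\<lambda>r. EA_vec i j k r a) = vadd (vscale P (vsing i M)) (vsing j M)"
      by (auto simp: coef_vec_eval_simps intro!: ext)
    with e show ?thesis by (auto intro: jk_e.intros)
  next
    case 3
    with e have "(\<lambda>r. EA_vec i j k r a) = wvars e"
      by (auto simp: coef_vec_eval_simps intro!: ext)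
    then show ?thesis by (simp add: jk_e.E2)
  qed
qed

lemma det_e_jk_e:
  assumes "det_e e K V" and "\<forall>k\<in>K. a k \<in> {0, 1, 2}"
  shows "jk_e e (\<lambda>r. V r a)"
  using assms
proof cases
  case (EM i j)
  then have "(\<lambda>r. V r a) = wvars e"
    by (auto simp: coef_vec_eval_simps intro!: ext)
  then show ?thesis by (simp add: jk_e.E2)
next
  case (ES i)
  then have "(\<lambda>r. V r a) = vsing i M"
    by (auto simp: coef_vec_eval_simps intro!: ext)
  with ES show ?thesis by (simp add: jk_e.E1)
next
  case (EA_minus i j k)
  then show ?thesis
    using assms(2) jk_e_EA_vec[of e i j a k] by (simp add: EA_vec_def)
next
  case (EA_plus i j k)
  then show ?thesis
    using assms(2) jk_e_EA_vec[of e i j a k] by (simp add: EA_vec_def)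
qed

lemma det_jk:
  "det n C K A \<Longrightarrow> \<forall>k\<in>K. a k \<in> {0, 1, 2} \<Longrightarrow> infty_free n (evalm A a) \<Longrightarrow> jk n C (evalm A a)"
proof (induction rule: det.induct)
  case (A e K V j)
  then show ?case by (simp add: evalm_colupd det_e_jk_e jk.A)
next
  case (C C1 K1 M1 C2 K2 M2)
  then show ?case by (simp add: evalm_mmul infty_free_mmul_iff jk.C)
next
  case (I C1 K1 M1 C2 K2 M2 b)
  then show ?case by (simp add: evalm_madd infty_free_madd_iff jk.I)
next
  case (L_inf C K A l)
  let ?S = "mstar n (evalm A a)"
  have "infty_free n ?S"
    and "infty_free n (\<lambda>r c. if r = c \<and> c < n \<and> ?S c c \<noteq> M then Infty else Zero)"
    using L_inf.prems(2)
    by (simp_all add: evalm_madd evalm_fstar evalm_if fstar_apply infty_free_madd_iff)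
  then have S_free: "infty_free n ?S" and diag: "\<And>c. c < n \<Longrightarrow> ?S c c = M"
    by (auto simp: infty_free_def)
  have "jk n C (evalm A a)"
    using L_inf S_free by (simp add: infty_free_mstar_iff)
  then show ?case
    using diag
    by (simp add: evalm_madd evalm_fstar evalm_if fstar_apply madd_Zero_right jk.L cong: conj_cong)
next
  case (W_inf C K A b)
  let ?S = "mstar n (evalm A a)"
  have "infty_free n ?S"
    and "infty_free n (\<lambda>r c. if r = c \<and> c < n \<and> ?S c c \<noteq> M then Infty else Zero)"
    and "infty_free n (\<lambda>r c. if r < n \<and> c < n \<and> ?S r c = P then Infty else Zero)"
    using W_inf.prems(2)
    by (simp_all add: evalm_madd evalm_fstar evalm_if fstar_apply infty_free_madd_iff)
  then have S_free: "infty_free n ?S" and diag: "\<And>c. c < n \<Longrightarrow> ?S c c = M"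
    and no_P: "\<And>i j. i < n \<Longrightarrow> j < n \<Longrightarrow> ?S i j \<noteq> P"
    by (auto simp: infty_free_def)
  have "jk n C (evalm A a)"
    using W_inf S_free by (simp add: infty_free_mstar_iff)
  then show ?case
    using diag no_P
    by (simp add: evalm_madd evalm_fstar evalm_if fstar_apply madd_Zero_right jk.W cong: conj_cong)
qed

theorem theorem10:
  fixes n p :: nat and Prog :: "'b cmd" and Mf :: "coef mat" and a :: choice
  assumes "cvars Prog \<subseteq> {..<n}"
    and "det n Prog {1..p} Mf"
    and "a \<in> {1..p} \<rightarrow>\<^sub>E {0, 1, 2}"
  shows "jk n Prog (evalm Mf a) \<longleftrightarrow> (\<forall>i<n. \<forall>j<n. evalm Mf a i j \<noteq> Infty)"
proof
  assume "jk n Prog (evalm Mf a)"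
  then show "\<forall>i<n. \<forall>j<n. evalm Mf a i j \<noteq> Infty"
    using jk_infty_free unfolding infty_free_def by blast
next
  assume "\<forall>i<n. \<forall>j<n. evalm Mf a i j \<noteq> Infty"
  moreover have "\<forall>k\<in>{1..p}. a k \<in> {0, 1, 2}"
    using assms(3) unfolding PiE_def Pi_def by blast
  ultimately show "jk n Prog (evalm Mf a)"
    using det_jk[OF assms(2)] unfolding infty_free_def by blast
qed

end
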